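(* The function $\Phi:[0,+\infty)\to\mathbb R$ is continuous on $[0,+\infty)$.
   Context: Let $V(x)=(x^2/2-1)^2$, $x_+(E)=\sqrt{2+2\sqrt E}$ for $E\ge0$, $x_-(E)=\sqrt{2-2\sqrt E}$ for $E\in[0,1]$ and $x_-(E)=0$ for $E\ge1$. For $E\in(0,1)\cup(1,\infty)$ set $C(E)=\left(\int_{x_-(E)}^{x_+(E)}(E-V(x))^{-1/2}dx\right)^{-1}$ and $F(E)=\int_{x_-(E)}^{x_+(E)}\frac{2-x^2}{\sqrt{E-V(x)}}dx$. Define $\Phi(0)=0$, $\Phi(1)=2$, and $\Phi(E)=C(E)F(E)$ for $E\in(0,1)\cup(1,\infty)$. *)

theory Defs
  imports "HOL-Analysis.Analysis"
begin

definition V :: "real \<Rightarrow> real" where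
  "V x = (x^2 / 2 - 1)^2"

definition xplus :: "real \<Rightarrow> real" where
  "xplus E = sqrt (2 + 2 * sqrt E)"

definition xminus :: "real \<Rightarrow> real" where
  "xminus E = (if E \<le> 1 then sqrt (2 - 2 * sqrt E) else 0)"

text \<open>The integrals are (improper) integrals over the interval between the turning
points; the integrands are absolutely integrable, so the Henstock-Kurzweil integral
over the closed interval coincides with the improper Riemann/Lebesgue integral
(the endpoint values are irrelevant).\<close>

definition Cfun :: "real \<Rightarrow> real" where
  "Cfun E = inverse (integral {xminus E..xplus E} (\<lambda>x. 1 / sqrt (E - V x)))"

definition Ffun :: "real \<Rightarrow> real" where
  "Ffun E = integral {xminus E..xplus E} (\<lambda>x. (2 - x^2) / sqrt (E - V x))"

definition Phi :: "real \<Rightarrow> real" where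
  "Phi E = (if E = 0 then 0 else if E = 1 then 2 else Cfun E * Ffun E)"

end

theory Submission
  imports Defs "HOL-Real_Asymp.Real_Asymp"
begin

text \<open>Write s = sqrt E. Below the barrier (E < 1) the substitution x^2 = 2 + 2 s sin t, above it
(E > 1) the substitution x = xplus E * sin t, turn the integrals J of 1 / sqrt (E - V x) and K of
x^2 / sqrt (E - V x) over the well into integrals over a fixed interval of integrands continuous
in (s, t). Since 2 - x^2 combines the two weights, Phi E = 2 - K / J, which is continuous in s on
either side of the separatrix s = 1. As s tends to 1, J diverges logarithmically (near one end of
the interval its integrand is bounded below by 1 / (c + t) with c tending to 0) while K stays
bounded, so Phi tends to 2 = Phi 1 from both sides.\<close>

text \<open>Unlike has_integral_substitution, this needs no continuity of f, which here
is unbounded at the turning points; it goes through the Lebesgue integral of nonnegative functions.\<close>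

lemma has_integral_substitution_nonneg:
  fixes f g g' p :: "real \<Rightarrow> real"
  assumes f_meas: "f \<in> borel_measurable borel"
    and f_nonneg: "\<And>x. x \<in> {g a..g b} \<Longrightarrow> 0 \<le> f x"
    and g_deriv: "\<And>x. x \<in> {a..b} \<Longrightarrow> (g has_real_derivative g' x) (at x)"
    and g'_cont: "continuous_on {a..b} g'"
    and g'_nonneg: "\<And>x. x \<in> {a..b} \<Longrightarrow> 0 \<le> g' x"
    and "a \<le> b"
    and p_cont: "continuous_on {a..b} p"
    and p_nonneg: "\<And>x. x \<in> {a..b} \<Longrightarrow> 0 \<le> p x"
    and p_eq: "\<And>x. x \<in> {a<..<b} \<Longrightarrow> f (g x) * g' x = p x"
  shows "(f has_integral integral {a..b} p) {g a..g b}"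
proof -
  define r where "r = integral {a..b} p"
  have p_int: "(p has_integral r) {a..b}"
    unfolding r_def using p_cont by (intro integrable_integral integrable_continuous_interval)
  have r_nonneg: "0 \<le> r" using p_int p_nonneg by (metis has_integral_nonneg)
  have "set_borel_measurable borel {g a..g b} f"
    using f_meas unfolding set_borel_measurable_def by measurable
  note subst = nn_integral_substitution[OF this g_deriv g'_cont g'_nonneg \<open>a \<le> b\<close>]
  have "(\<integral>\<^sup>+x. f (g x) * g' x * indicator {a..b} x \<partial>lborel)
      = (\<integral>\<^sup>+x. ennreal (p x) * indicator {a..b} x \<partial>lborel)"
    using AE_lborel_singleton[of a] AE_lborel_singleton[of b]
    by (intro nn_integral_cong_AE, eventually_elim) (auto simp: p_eq split: split_indicator)
  also have "\<dots> = ennreal r"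
    by (rule nn_integral_has_integral_lebesgue'[OF p_nonneg p_int]) auto
  finally have nn_eq: "(\<integral>\<^sup>+x. ennreal (f x * indicator {g a..g b} x) \<partial>lborel) = ennreal r"
    using subst by simp
  have "((\<lambda>x. f x * indicator {g a..g b} x) has_integral r) UNIV"
    by (rule nn_integral_has_integral[OF _ _ nn_eq r_nonneg])
      (use f_meas f_nonneg in \<open>auto split: split_indicator\<close>)
  then have "((\<lambda>x. if x \<in> {g a..g b} then f x else 0) has_integral r) UNIV"
    by (rule has_integral_eq[rotated]) (auto split: split_indicator)
  then show ?thesis unfolding r_def[symmetric] has_integral_restrict_UNIV .
qed

lemma continuous_on_integral_param_interval:
  fixes f :: "'a::topological_space \<Rightarrow> real \<Rightarrow> 'b::banach"
  assumes "continuous_on (S \<times> {a..b}) (\<lambda>z. f (fst z) (snd z))"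
  shows "continuous_on S (\<lambda>s. integral {a..b} (f s))"
  using integral_continuous_on_param[of S a b f] assms by (simp add: case_prod_beta')

lemma tendsto_divide_0_bounded_at_top:
  fixes f g :: "'a \<Rightarrow> real"
  assumes "eventually (\<lambda>x. \<bar>f x\<bar> \<le> B) F" and g: "filterlim g at_top F"
  shows "((\<lambda>x. f x / g x) \<longlongrightarrow> 0) F"
proof (rule Lim_null_comparison)
  have "eventually (\<lambda>x. 0 < g x) F"
    using g by (simp add: filterlim_at_top_dense)
  with assms(1) show "eventually (\<lambda>x. norm (f x / g x) \<le> B / g x) F"
    by eventually_elim (simp add: abs_divide divide_right_mono)
  show "((\<lambda>x. B / g x) \<longlongrightarrow> 0) F"
    using tendsto_divide_0[OF tendsto_const filterlim_at_top_imp_at_infinity[OF g]] .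
qed

lemma ln_ratio_le_integral:
  fixes f :: "real \<Rightarrow> real"
  assumes "0 < c" "a + 1 \<le> b" and f_int: "f integrable_on {a..b}"
    and nonneg: "\<And>t. t \<in> {a..b} \<Longrightarrow> 0 \<le> f t"
    and below: "\<And>t. t \<in> {a..a+1} \<Longrightarrow> k / (c + (t - a)) \<le> f t"
  shows "k * (ln (c + 1) - ln c) \<le> integral {a..b} f"
proof -
  have f_int': "f integrable_on {a..a+1}"
    using integrable_on_subinterval[OF f_int] assms(2) by simp
  have "((\<lambda>t. ln (c + (t - a))) has_real_derivative 1 / (c + (t - a))) (at t)"
    if "t \<in> {a..a+1}" for t
    using that \<open>0 < c\<close> by (auto intro!: derivative_eq_intros)
  then have "((\<lambda>t. 1 / (c + (t - a))) has_integral ln (c + 1) - ln c) {a..a+1}"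
    using fundamental_theorem_of_calculus[of a "a+1" "\<lambda>t. ln (c + (t - a))"]
    by (simp add: has_real_derivative_iff_has_vector_derivative has_vector_derivative_at_within)
  from has_integral_mult_right[OF this, of k]
  have "((\<lambda>t. k / (c + (t - a))) has_integral k * (ln (c + 1) - ln c)) {a..a+1}"
    by simp
  then have "k * (ln (c + 1) - ln c) \<le> integral {a..a+1} f"
    using has_integral_le[OF _ integrable_integral[OF f_int'] below] by blast
  also have "\<dots> \<le> integral {a..b} f"
    using assms(2) f_int f_int' nonneg by (intro integral_subset_le) auto
  finally show ?thesis .
qed

lemma divide_sqrt_le_sqrt:
  fixes a w :: real
  assumes "0 \<le> a" "a \<le> w"
  shows "a / sqrt w \<le> sqrt a"
proof (cases "a = 0")
  case False
  then have "a / sqrt w \<le> a / sqrt a"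
    using assms by (intro divide_left_mono) auto
  also have "\<dots> = sqrt a"
    using assms(1) by (rule real_div_sqrt)
  finally show ?thesis .
qed simp

lemma one_minus_cos_le: "1 - cos u \<le> u^2 / (2::real)"
proof -
  have "1 - cos u = 2 * (sin (u/2))^2"
    using cos_double_sin[of "u/2"] by simp
  also have "(sin (u/2))^2 \<le> (u/2)^2"
    using abs_sin_x_le_abs_x[of "u/2"] by (simp only: abs_le_square_iff)
  finally show ?thesis by (simp add: power_divide)
qed

lemma V_le_on_well:
  assumes "0 \<le> E" and x: "x \<in> {xminus E..xplus E}"
  shows "V x \<le> E"
proof -
  have "0 \<le> xminus E"
    unfolding xminus_def by auto
  with x have x_nonneg: "0 \<le> x" by simp
  have "x^2 \<le> (xplus E)^2"
    using x x_nonneg by (intro power_mono) auto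
  then have upper: "x^2/2 - 1 \<le> sqrt E"
    using \<open>0 \<le> E\<close> by (simp add: xplus_def)
  have lower: "- sqrt E \<le> x^2/2 - 1"
  proof (cases "E \<le> 1")
    case True
    then have "(xminus E)^2 \<le> x^2"
      using x by (intro power_mono) (auto simp: xminus_def)
    with True \<open>0 \<le> E\<close> show ?thesis by (simp add: xminus_def)
  next
    case False
    then have "1 \<le> sqrt E" by simp
    moreover have "0 \<le> x^2" by simp
    ultimately show ?thesis by linarith
  qed
  have "\<bar>x^2/2 - 1\<bar> \<le> \<bar>sqrt E\<bar>"
    using upper lower \<open>0 \<le> E\<close> by (simp add: abs_le_iff)
  then have "(x^2/2 - 1)^2 \<le> (sqrt E)^2"
    by (simp only: abs_le_square_iff)
  with \<open>0 \<le> E\<close> show ?thesis by (simp add: V_def)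
qed

lemma two_add_two_mult_sin_pos:
  fixes s t :: real
  assumes "\<bar>s\<bar> < 1"
  shows "0 < 2 + 2 * s * sin t"
proof -
  have "\<bar>s * sin t\<bar> \<le> \<bar>s\<bar>"
    using abs_sin_le_one[of t] by (simp add: abs_mult mult_left_le)
  with assms show ?thesis by linarith
qed

lemma V_measurable [measurable]: "V \<in> borel_measurable borel"
  unfolding V_def by measurable

lemma has_integral_below_barrier:
  fixes h :: "real \<Rightarrow> real"
  assumes E: "0 < E" "E < 1" and h_cont: "continuous_on UNIV h" and h_nonneg: "\<And>x. 0 \<le> h x"
  shows "((\<lambda>x. h x / sqrt (E - V x)) has_integral
           integral {-pi/2..pi/2} (\<lambda>t. h (sqrt (2 + 2 * sqrt E * sin t)) / sqrt (2 + 2 * sqrt E * sin t)))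
         {xminus E..xplus E}"
proof -
  define s where "s = sqrt E"
  have s: "0 < s" "s < 1" "E = s^2"
    using E by (auto simp: s_def)
  define g where "g t = sqrt (2 + 2 * s * sin t)" for t
  have radicand_pos: "0 < 2 + 2 * s * sin t" for t
    using s by (intro two_add_two_mult_sin_pos) simp
  then have g_pos: "0 < g t" for t
    by (simp add: g_def)
  have g_cont: "continuous_on UNIV g"
    unfolding g_def by (intro continuous_intros)
  have g_deriv: "(g has_real_derivative s * cos t / g t) (at t)" for t
    unfolding g_def using radicand_pos[of t] by (auto intro!: derivative_eq_intros simp: field_simps)
  have ends: "xminus E = g (-pi/2)" "xplus E = g (pi/2)"
    using E s by (simp_all add: g_def xminus_def xplus_def)
  have root_eq: "sqrt (E - V (g t)) = s * cos t" if "t \<in> {-pi/2<..<pi/2}" for t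
  proof -
    have "V (g t) = (s * sin t)^2"
      unfolding V_def g_def using radicand_pos[of t] by (simp add: add_divide_distrib)
    then have "E - V (g t) = (s * cos t)^2"
      using s by (simp add: power_mult_distrib cos_squared_eq algebra_simps)
    moreover have "0 < cos t"
      using that by (auto intro!: cos_gt_zero_pi)
    ultimately show ?thesis using s by simp
  qed
  have [measurable]: "h \<in> borel_measurable borel"
    using h_cont by (rule borel_measurable_continuous_onI)
  show ?thesis
    unfolding s_def[symmetric] g_def[symmetric] ends
  proof (rule has_integral_substitution_nonneg[where g' = "\<lambda>t. s * cos t / g t"])
    show "(\<lambda>x. h x / sqrt (E - V x)) \<in> borel_measurable borel"
      by measurable
    show "0 \<le> h x / sqrt (E - V x)" if "x \<in> {g (-pi/2)..g (pi/2)}" for x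
    proof -
      have "x \<in> {xminus E..xplus E}"
        using that by (simp only: ends)
      with E V_le_on_well[of E x] h_nonneg[of x] show ?thesis by simp
    qed
    show "continuous_on {-pi/2..pi/2} (\<lambda>t. s * cos t / g t)"
      using g_pos by (auto intro!: continuous_intros continuous_on_subset[OF g_cont] simp: less_imp_neq[symmetric])
    show "continuous_on {-pi/2..pi/2} (\<lambda>t. h (g t) / g t)"
      using g_pos by (auto intro!: continuous_intros continuous_on_compose2[OF h_cont] continuous_on_subset[OF g_cont]
          simp: less_imp_neq[symmetric])
    show "0 \<le> s * cos t / g t" if "t \<in> {-pi/2..pi/2}" for t
      using that s g_pos[of t] by (auto intro!: divide_nonneg_pos mult_nonneg_nonneg cos_ge_zero)
    show "0 \<le> h (g t) / g t" for t
      using h_nonneg g_pos[of t] by simp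
    show "h (g t) / sqrt (E - V (g t)) * (s * cos t / g t) = h (g t) / g t" if "t \<in> {-pi/2<..<pi/2}" for t
      using root_eq[OF that] cos_gt_zero_pi[of t] that s by (auto simp: field_simps)
  qed (use g_deriv in auto)
qed

lemma has_integral_above_barrier:
  fixes h :: "real \<Rightarrow> real"
  assumes E: "1 < E" and h_cont: "continuous_on UNIV h" and h_nonneg: "\<And>x. 0 \<le> h x"
  shows "((\<lambda>x. h x / sqrt (E - V x)) has_integral
           integral {0..pi/2} (\<lambda>t. h (xplus E * sin t) * sqrt 2 / sqrt (sqrt E - 1 + (1 + sqrt E) * (sin t)^2)))
         {xminus E..xplus E}"
proof -
  define s where "s = sqrt E"
  have s: "1 < s" "E = s^2"
    using E by (auto simp: s_def)
  define w where "w t = s - 1 + (1 + s) * (sin t)^2" for t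
  have w_pos: "0 < w t" for t
    using s by (simp add: w_def add_pos_nonneg)
  define xp where "xp = xplus E"
  have xp: "xp = sqrt 2 * sqrt (1 + s)"
    unfolding xp_def xplus_def s_def by (simp add: real_sqrt_mult[symmetric] algebra_simps)
  have xp_sq: "xp^2 = 2 + 2 * s"
    using s by (simp add: xp power_mult_distrib)
  have ends: "xminus E = xp * sin 0" "xplus E = xp * sin (pi/2)"
    using E by (simp_all add: xminus_def xp_def)
  have root_eq: "sqrt (E - V (xp * sin t)) = sqrt (1 + s) * cos t * sqrt (w t)"
    if "t \<in> {0<..<pi/2}" for t
  proof -
    have "(xp * sin t)^2 / 2 - 1 = (1 + s) * (sin t)^2 - 1"
      unfolding power_mult_distrib xp_sq by (simp add: field_simps)
    then have "V (xp * sin t) = ((1 + s) * (sin t)^2 - 1)^2"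
      by (simp add: V_def)
    moreover have "s^2 - ((1 + s) * S - 1)^2 = (1 + s) * (1 - S) * (s - 1 + (1 + s) * S)" for S
      by (simp add: power2_eq_square algebra_simps)
    ultimately have "E - V (xp * sin t) = (1 + s) * (cos t)^2 * w t"
      by (simp add: s(2) w_def cos_squared_eq)
    also have "\<dots> = (sqrt (1 + s) * cos t * sqrt (w t))^2"
      using s w_pos[of t] by (simp add: power_mult_distrib)
    finally show ?thesis
      using that s w_pos[of t] cos_gt_zero_pi[of t] by simp
  qed
  have [measurable]: "h \<in> borel_measurable borel"
    using h_cont by (rule borel_measurable_continuous_onI)
  have "((\<lambda>x. h x / sqrt (E - V x)) has_integral integral {0..pi/2} (\<lambda>t. h (xp * sin t) * sqrt 2 / sqrt (w t)))
      {xp * sin 0..xp * sin (pi/2)}"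
  proof (rule has_integral_substitution_nonneg[where g' = "\<lambda>t. xp * cos t"])
    show "(\<lambda>x. h x / sqrt (E - V x)) \<in> borel_measurable borel"
      by measurable
    show "0 \<le> h x / sqrt (E - V x)" if "x \<in> {xp * sin 0..xp * sin (pi/2)}" for x
    proof -
      have "x \<in> {xminus E..xplus E}"
        using that by (simp only: ends)
      with E V_le_on_well[of E x] h_nonneg[of x] show ?thesis by simp
    qed
    show "((\<lambda>t. xp * sin t) has_real_derivative xp * cos t) (at t)" for t
      by (auto intro!: derivative_eq_intros)
    show "continuous_on {0..pi/2} (\<lambda>t. h (xp * sin t) * sqrt 2 / sqrt (w t))"
      using w_pos unfolding w_def
      by (auto intro!: continuous_intros continuous_on_compose2[OF h_cont] simp: less_imp_neq[symmetric])
    show "0 \<le> xp * cos t" if "t \<in> {0..pi/2}" for t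
      using that s cos_ge_zero[of t] by (simp add: xp)
    show "0 \<le> h (xp * sin t) * sqrt 2 / sqrt (w t)" for t
      using h_nonneg w_pos[of t] by simp
    show "h (xp * sin t) / sqrt (E - V (xp * sin t)) * (xp * cos t) = h (xp * sin t) * sqrt 2 / sqrt (w t)"
      if "t \<in> {0<..<pi/2}" for t
      using root_eq[OF that] cos_gt_zero_pi[of t] that s w_pos[of t] by (auto simp: field_simps xp)
  qed (auto intro!: continuous_intros)
  then show ?thesis
    unfolding ends[symmetric] unfolding xp_def s_def w_def .
qed

definition J_below :: "real \<Rightarrow> real" where
  "J_below s = integral {-pi/2..pi/2} (\<lambda>t. 1 / sqrt (2 + 2 * s * sin t))"

definition K_below :: "real \<Rightarrow> real" where
  "K_below s = integral {-pi/2..pi/2} (\<lambda>t. sqrt (2 + 2 * s * sin t))"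

definition J_above :: "real \<Rightarrow> real" where
  "J_above s = integral {0..pi/2} (\<lambda>t. sqrt 2 / sqrt (s - 1 + (1 + s) * (sin t)^2))"

definition K_above :: "real \<Rightarrow> real" where
  "K_above s = integral {0..pi/2} (\<lambda>t. (2 + 2 * s) * (sin t)^2 * sqrt 2 / sqrt (s - 1 + (1 + s) * (sin t)^2))"

lemma has_integral_J_K_below:
  assumes "0 < E" "E < 1"
  shows "((\<lambda>x. 1 / sqrt (E - V x)) has_integral J_below (sqrt E)) {xminus E..xplus E}"
    and "((\<lambda>x. x^2 / sqrt (E - V x)) has_integral K_below (sqrt E)) {xminus E..xplus E}"
proof -
  show "((\<lambda>x. 1 / sqrt (E - V x)) has_integral J_below (sqrt E)) {xminus E..xplus E}"
    using has_integral_below_barrier[of E "\<lambda>_. 1"] assms by (simp add: J_below_def)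
  have "0 < 2 + 2 * sqrt E * sin t" for t
    using assms by (intro two_add_two_mult_sin_pos) simp
  then have "(sqrt (2 + 2 * sqrt E * sin t))^2 / sqrt (2 + 2 * sqrt E * sin t) = sqrt (2 + 2 * sqrt E * sin t)" for t
    by (simp add: less_imp_le real_div_sqrt)
  then show "((\<lambda>x. x^2 / sqrt (E - V x)) has_integral K_below (sqrt E)) {xminus E..xplus E}"
    using has_integral_below_barrier[of E "\<lambda>x. x^2"] assms by (simp add: K_below_def continuous_intros)
qed

lemma has_integral_J_K_above:
  assumes "1 < E"
  shows "((\<lambda>x. 1 / sqrt (E - V x)) has_integral J_above (sqrt E)) {xminus E..xplus E}"
    and "((\<lambda>x. x^2 / sqrt (E - V x)) has_integral K_above (sqrt E)) {xminus E..xplus E}"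
proof -
  show "((\<lambda>x. 1 / sqrt (E - V x)) has_integral J_above (sqrt E)) {xminus E..xplus E}"
    using has_integral_above_barrier[of E "\<lambda>_. 1"] assms by (simp add: J_above_def)
  have "(xplus E)^2 = 2 + 2 * sqrt E"
    using assms by (simp add: xplus_def)
  then show "((\<lambda>x. x^2 / sqrt (E - V x)) has_integral K_above (sqrt E)) {xminus E..xplus E}"
    using has_integral_above_barrier[of E "\<lambda>x. x^2"] assms
    by (simp add: K_above_def power_mult_distrib continuous_intros)
qed

lemma Phi_eq_moment_ratio:
  assumes "0 < E" "E \<noteq> 1" "J \<noteq> 0"
    and J: "((\<lambda>x. 1 / sqrt (E - V x)) has_integral J) {xminus E..xplus E}"
    and K: "((\<lambda>x. x^2 / sqrt (E - V x)) has_integral K) {xminus E..xplus E}"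
  shows "Phi E = 2 - K / J"
proof -
  have "((\<lambda>x. 2 * (1 / sqrt (E - V x)) - x^2 / sqrt (E - V x)) has_integral 2 * J - K) {xminus E..xplus E}"
    by (intro has_integral_diff has_integral_mult_right J K)
  then have "((\<lambda>x. (2 - x^2) / sqrt (E - V x)) has_integral 2 * J - K) {xminus E..xplus E}"
    by (simp add: diff_divide_distrib)
  then have F: "Ffun E = 2 * J - K"
    unfolding Ffun_def by (rule integral_unique)
  have C: "Cfun E = inverse J"
    unfolding Cfun_def using integral_unique[OF J] by simp
  show ?thesis
    using assms(1-3) by (simp add: Phi_def F C field_simps)
qed

lemma J_below_pos:
  assumes "\<bar>s\<bar> < 1"
  shows "0 < J_below s"
proof -
  have "1 / 2 \<le> 1 / sqrt (2 + 2 * s * sin t)" for t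
  proof -
    have "\<bar>s * sin t\<bar> \<le> 1"
      using assms abs_sin_le_one[of t] by (simp add: abs_mult mult_le_one)
    then have "sqrt (2 + 2 * s * sin t) \<le> sqrt 4"
      by (intro real_sqrt_le_mono) linarith
    then show ?thesis
      using two_add_two_mult_sin_pos[OF assms, of t] by (intro divide_left_mono) auto
  qed
  then have "integral {-pi/2..pi/2} (\<lambda>t. 1 / 2) \<le> J_below s"
    unfolding J_below_def using two_add_two_mult_sin_pos[OF assms]
    by (intro integral_le integrable_continuous_interval continuous_intros) (auto simp: less_imp_neq[symmetric])
  moreover have "0 < integral {-pi/2..pi/2} (\<lambda>t. 1 / 2 :: real)"
    by simp
  ultimately show ?thesis by linarith
qed

lemma J_above_pos:
  assumes "1 < s"
  shows "0 < J_above s"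
proof -
  have "1 / sqrt s \<le> sqrt 2 / sqrt (s - 1 + (1 + s) * (sin t)^2)" for t
  proof -
    have w_pos: "0 < s - 1 + (1 + s) * (sin t)^2"
      using assms by (simp add: add_pos_nonneg)
    have "(1 + s) * (sin t)^2 \<le> 1 + s"
      using assms by (intro mult_left_le) (auto simp: abs_square_le_1)
    then have "sqrt (s - 1 + (1 + s) * (sin t)^2) \<le> sqrt 2 * sqrt s"
      by (simp flip: real_sqrt_mult)
    then have "sqrt 2 / (sqrt 2 * sqrt s) \<le> sqrt 2 / sqrt (s - 1 + (1 + s) * (sin t)^2)"
      using assms w_pos by (intro divide_left_mono) auto
    then show ?thesis by simp
  qed
  then have "integral {0..pi/2} (\<lambda>t. 1 / sqrt s) \<le> J_above s"
    unfolding J_above_def using assms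
    by (intro integral_le integrable_continuous_interval continuous_intros)
      (auto simp: add_pos_nonneg less_imp_neq[symmetric])
  moreover have "0 < integral {0..pi/2} (\<lambda>t. 1 / sqrt s)"
    using assms by simp
  ultimately show ?thesis by linarith
qed

lemma abs_K_below_le:
  assumes "\<bar>s\<bar> \<le> 1"
  shows "\<bar>K_below s\<bar> \<le> 2 * pi"
proof -
  have "\<bar>sqrt (2 + 2 * s * sin t)\<bar> \<le> 2" for t
  proof -
    have "\<bar>s * sin t\<bar> \<le> 1"
      using assms abs_sin_le_one[of t] by (simp add: abs_mult mult_le_one)
    then have "0 \<le> 2 + 2 * s * sin t" "sqrt (2 + 2 * s * sin t) \<le> sqrt 4"
      by (linarith, intro real_sqrt_le_mono, linarith)
    then show ?thesis by simp
  qed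
  then have "\<bar>K_below s\<bar> \<le> 2 * (pi/2 - - pi/2)"
    unfolding K_below_def using integral_bound[of "-pi/2" "pi/2" "\<lambda>t. sqrt (2 + 2 * s * sin t)" 2]
    by (simp add: continuous_intros)
  then show ?thesis by simp
qed

lemma abs_K_above_le:
  assumes "1 < s"
  shows "\<bar>K_above s\<bar> \<le> pi * sqrt 2 * sqrt (1 + s)"
proof -
  have "\<bar>(2 + 2 * s) * (sin t)^2 * sqrt 2 / sqrt (s - 1 + (1 + s) * (sin t)^2)\<bar> \<le> 2 * sqrt 2 * sqrt (1 + s)" for t
  proof -
    define a where "a = (1 + s) * (sin t)^2"
    define w where "w = s - 1 + a"
    have a: "0 \<le> a" "a \<le> w" "a \<le> 1 + s"
      using assms by (auto simp: a_def w_def abs_square_le_1 intro!: mult_left_le)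
    have eq: "(2 + 2 * s) * (sin t)^2 * sqrt 2 / sqrt (s - 1 + (1 + s) * (sin t)^2) = 2 * sqrt 2 * (a / sqrt w)"
      by (simp add: a_def w_def algebra_simps)
    have "2 * sqrt 2 * (a / sqrt w) \<le> 2 * sqrt 2 * sqrt a"
      using a by (intro mult_left_mono divide_sqrt_le_sqrt) auto
    also have "\<dots> \<le> 2 * sqrt 2 * sqrt (1 + s)"
      using a by simp
    finally show ?thesis
      unfolding eq using a by (simp add: abs_of_nonneg)
  qed
  then have "norm (K_above s) \<le> 2 * sqrt 2 * sqrt (1 + s) * (pi/2 - 0)"
    unfolding K_above_def using assms
    by (intro integral_bound) (auto intro!: continuous_intros simp: add_pos_nonneg less_imp_neq[symmetric])
  then show ?thesis by (simp add: mult_ac)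
qed

lemma continuous_on_J_below: "continuous_on {-1<..<1} J_below"
proof -
  have "\<forall>z \<in> {-1<..<1} \<times> {-pi/2..pi/2}. sqrt (2 + 2 * fst z * sin (snd z)) \<noteq> 0"
  proof
    fix z :: "real \<times> real"
    assume "z \<in> {-1<..<1} \<times> {-pi/2..pi/2}"
    then have "\<bar>fst z\<bar> < 1" by auto
    from two_add_two_mult_sin_pos[OF this, of "snd z"] show "sqrt (2 + 2 * fst z * sin (snd z)) \<noteq> 0"
      by simp
  qed
  then show ?thesis
    unfolding J_below_def by (intro continuous_on_integral_param_interval continuous_intros)
qed

lemma continuous_on_K_below: "continuous_on {-1<..<1} K_below"
  unfolding K_below_def by (intro continuous_on_integral_param_interval continuous_intros)

lemma continuous_on_J_above: "continuous_on {1<..} J_above"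
proof -
  have "\<forall>z \<in> {1<..} \<times> {0..pi/2}. sqrt (fst z - 1 + (1 + fst z) * (sin (snd z))^2) \<noteq> 0"
    by (auto simp: add_pos_nonneg less_imp_neq[symmetric])
  then show ?thesis
    unfolding J_above_def by (intro continuous_on_integral_param_interval continuous_intros)
qed

lemma continuous_on_K_above: "continuous_on {1<..} K_above"
proof -
  have "\<forall>z \<in> {1<..} \<times> {0..pi/2}. sqrt (fst z - 1 + (1 + fst z) * (sin (snd z))^2) \<noteq> 0"
    by (auto simp: add_pos_nonneg less_imp_neq[symmetric])
  then show ?thesis
    unfolding K_above_def by (intro continuous_on_integral_param_interval continuous_intros)
qed

lemma J_below_ge_ln:
  assumes "0 \<le> s" "s < 1"
  defines "c \<equiv> sqrt (2 * (1 - s))"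
  shows "ln (c + 1) - ln c \<le> J_below s"
proof -
  have c_pos: "0 < c"
    unfolding c_def using assms by simp
  have radicand_pos: "0 < 2 + 2 * s * sin t" for t
    using assms by (intro two_add_two_mult_sin_pos) simp
  have "1 / (c + (t - - pi/2)) \<le> 1 / sqrt (2 + 2 * s * sin t)" if "t \<in> {-pi/2..-pi/2+1}" for t
  proof -
    define u where "u = t + pi/2"
    have u: "0 \<le> u" "u \<le> 1" "0 \<le> c * u"
      using that c_pos by (auto simp: u_def)
    have "2 + 2 * s * sin t = c^2 + 2 * s * (1 - cos u)"
      using assms by (simp add: c_def u_def cos_add algebra_simps)
    also have "\<dots> \<le> c^2 + 2 * (1 - cos u)"
      using assms mult_left_le_one_le[of "1 - cos u" s] by simp
    also have "\<dots> \<le> (c + u)^2"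
      unfolding power2_sum using one_minus_cos_le[of u] u by (simp add: algebra_simps)
    finally have "sqrt (2 + 2 * s * sin t) \<le> c + u"
      using c_pos u by (simp add: real_le_lsqrt)
    then have "1 / (c + u) \<le> 1 / sqrt (2 + 2 * s * sin t)"
      using radicand_pos[of t] c_pos u by (intro divide_left_mono mult_pos_pos) auto
    then show ?thesis
      by (simp add: u_def)
  qed
  then have "1 * (ln (c + 1) - ln c) \<le> J_below s"
    unfolding J_below_def using c_pos radicand_pos pi_gt3
    by (intro ln_ratio_le_integral integrable_continuous_interval continuous_intros)
      (auto simp: less_imp_le less_imp_neq[symmetric])
  then show ?thesis by simp
qed

lemma J_above_ge_ln:
  assumes "1 < s" "s < 3"
  defines "c \<equiv> sqrt (s - 1)"
  shows "(ln (c + 1) - ln c) / 2 \<le> J_above s"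
proof -
  have c_pos: "0 < c"
    unfolding c_def using assms by simp
  have w_pos: "0 < s - 1 + (1 + s) * (sin t)^2" for t
    using assms by (simp add: add_pos_nonneg)
  have "(1/2) / (c + (t - 0)) \<le> sqrt 2 / sqrt (s - 1 + (1 + s) * (sin t)^2)" if "t \<in> {0..0+1}" for t
  proof -
    have t: "0 \<le> t" using that by simp
    have "(sin t)^2 \<le> t^2"
      using abs_sin_x_le_abs_x[of t] by (simp only: abs_le_square_iff)
    then have "(1 + s) * (sin t)^2 \<le> 4 * t^2"
      using assms by (intro mult_mono) auto
    moreover have "(2 * (c + t))^2 = 4 * (s - 1) + 8 * (c * t) + 4 * t^2"
      using assms by (simp add: c_def power2_eq_square algebra_simps)
    moreover have "0 \<le> c * t"
      using c_pos t by simp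
    ultimately have "s - 1 + (1 + s) * (sin t)^2 \<le> (2 * (c + t))^2"
      using assms(1) by (simp add: algebra_simps)
    then have "sqrt (s - 1 + (1 + s) * (sin t)^2) \<le> 2 * (c + t)"
      using c_pos t by (simp add: real_le_lsqrt)
    then have "1 / (2 * (c + t)) \<le> 1 / sqrt (s - 1 + (1 + s) * (sin t)^2)"
      using w_pos[of t] c_pos t by (intro divide_left_mono mult_pos_pos) auto
    also have "\<dots> \<le> sqrt 2 / sqrt (s - 1 + (1 + s) * (sin t)^2)"
      using w_pos[of t] by (intro divide_right_mono) auto
    finally show ?thesis by simp
  qed
  then have "1/2 * (ln (c + 1) - ln c) \<le> J_above s"
    unfolding J_above_def using c_pos w_pos pi_gt3
    by (intro ln_ratio_le_integral integrable_continuous_interval continuous_intros)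
      (auto simp: less_imp_le less_imp_neq[symmetric])
  then show ?thesis by simp
qed

lemma filterlim_J_below_at_left_1: "filterlim J_below at_top (at_left 1)"
proof (rule filterlim_at_top_mono)
  show "filterlim (\<lambda>s. ln (sqrt (2 * (1 - s)) + 1) - ln (sqrt (2 * (1 - s)))) at_top (at_left 1)"
    by real_asymp
  show "eventually (\<lambda>s. ln (sqrt (2 * (1 - s)) + 1) - ln (sqrt (2 * (1 - s))) \<le> J_below s) (at_left 1)"
    using eventually_at_left_real[OF zero_less_one] by eventually_elim (rule J_below_ge_ln; simp)
qed

lemma filterlim_J_above_at_right_1: "filterlim J_above at_top (at_right 1)"
proof (rule filterlim_at_top_mono)
  show "filterlim (\<lambda>s. (ln (sqrt (s - 1) + 1) - ln (sqrt (s - 1))) / 2) at_top (at_right 1)"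
    by real_asymp
  have "eventually (\<lambda>s. s \<in> {1<..<3}) (at_right (1::real))"
    by (rule eventually_at_right_real) simp
  then show "eventually (\<lambda>s. (ln (sqrt (s - 1) + 1) - ln (sqrt (s - 1))) / 2 \<le> J_above s) (at_right 1)"
    by eventually_elim (rule J_above_ge_ln; simp)
qed

definition Phi_root :: "real \<Rightarrow> real" where
  "Phi_root s = (if s < 1 then 2 - K_below s / J_below s else if s = 1 then 2 else 2 - K_above s / J_above s)"

lemma Phi_eq_Phi_root:
  assumes "0 \<le> E"
  shows "Phi E = Phi_root (sqrt E)"
proof -
  consider "E = 0" | "0 < E" "E < 1" | "E = 1" | "1 < E"
    using assms by fastforce
  then show ?thesis
  proof cases
    case 1
    have "J_below 0 = pi / sqrt 2" "K_below 0 = pi * sqrt 2"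
      by (simp_all add: J_below_def K_below_def)
    then show ?thesis
      using 1 by (simp add: Phi_def Phi_root_def)
  next
    case 2
    then have "J_below (sqrt E) \<noteq> 0"
      using J_below_pos[of "sqrt E"] by auto
    with 2 show ?thesis
      by (simp add: Phi_root_def Phi_eq_moment_ratio has_integral_J_K_below)
  next
    case 3
    then show ?thesis by (simp add: Phi_def Phi_root_def)
  next
    case 4
    then have "J_above (sqrt E) \<noteq> 0"
      using J_above_pos[of "sqrt E"] by auto
    with 4 show ?thesis
      by (simp add: Phi_root_def Phi_eq_moment_ratio has_integral_J_K_above)
  qed
qed

lemma continuous_on_Phi_root_below: "continuous_on {-1<..<1} Phi_root"
proof -
  have "J_below s \<noteq> 0" if "s \<in> {-1<..<1}" for s
    using that J_below_pos[of s] by (auto simp: abs_less_iff)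
  then have "continuous_on {-1<..<1} (\<lambda>s. 2 - K_below s / J_below s)"
    by (intro continuous_intros continuous_on_J_below continuous_on_K_below) auto
  then show ?thesis
    by (rule continuous_on_eq) (simp add: Phi_root_def)
qed

lemma continuous_on_Phi_root_above: "continuous_on {1<..} Phi_root"
proof -
  have "J_above s \<noteq> 0" if "s \<in> {1<..}" for s
    using that J_above_pos[of s] by auto
  then have "continuous_on {1<..} (\<lambda>s. 2 - K_above s / J_above s)"
    by (intro continuous_intros continuous_on_J_above continuous_on_K_above) auto
  then show ?thesis
    by (rule continuous_on_eq) (simp add: Phi_root_def)
qed

lemma tendsto_Phi_root_at_left_1: "(Phi_root \<longlongrightarrow> 2) (at_left 1)"
proof -
  have below: "eventually (\<lambda>s. s \<in> {0<..<1}) (at_left (1::real))"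
    by (rule eventually_at_left_real) simp
  then have "eventually (\<lambda>s. \<bar>K_below s\<bar> \<le> 2 * pi) (at_left 1)"
    by eventually_elim (simp add: abs_K_below_le)
  from tendsto_divide_0_bounded_at_top[OF this filterlim_J_below_at_left_1]
  have "((\<lambda>s. 2 - K_below s / J_below s) \<longlongrightarrow> 2) (at_left 1)"
    using tendsto_diff[OF tendsto_const, of _ 0 _ 2] by simp
  moreover from below have "eventually (\<lambda>s. 2 - K_below s / J_below s = Phi_root s) (at_left 1)"
    by eventually_elim (simp add: Phi_root_def)
  ultimately show ?thesis
    by (rule Lim_transform_eventually)
qed

lemma tendsto_Phi_root_at_right_1: "(Phi_root \<longlongrightarrow> 2) (at_right 1)"
proof -
  have above: "eventually (\<lambda>s. s \<in> {1<..<3}) (at_right (1::real))"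
    by (rule eventually_at_right_real) simp
  then have "eventually (\<lambda>s. \<bar>K_above s\<bar> \<le> pi * sqrt 2 * 2) (at_right 1)"
  proof eventually_elim
    case (elim s)
    then have "sqrt (1 + s) \<le> sqrt 4"
      by (intro real_sqrt_le_mono) simp
    then have "pi * sqrt 2 * sqrt (1 + s) \<le> pi * sqrt 2 * 2"
      by (intro mult_left_mono) auto
    moreover have "\<bar>K_above s\<bar> \<le> pi * sqrt 2 * sqrt (1 + s)"
      using elim by (simp add: abs_K_above_le)
    ultimately show ?case by linarith
  qed
  from tendsto_divide_0_bounded_at_top[OF this filterlim_J_above_at_right_1]
  have "((\<lambda>s. 2 - K_above s / J_above s) \<longlongrightarrow> 2) (at_right 1)"
    using tendsto_diff[OF tendsto_const, of _ 0 _ 2] by simp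
  moreover from above have "eventually (\<lambda>s. 2 - K_above s / J_above s = Phi_root s) (at_right 1)"
    by eventually_elim (simp add: Phi_root_def)
  ultimately show ?thesis
    by (rule Lim_transform_eventually)
qed

lemma isCont_Phi_root_1: "isCont Phi_root 1"
proof -
  have "(Phi_root \<longlongrightarrow> 2) (at 1)"
    using tendsto_Phi_root_at_left_1 tendsto_Phi_root_at_right_1 by (rule filterlim_split_at)
  then show ?thesis
    by (simp add: isCont_def Phi_root_def)
qed

lemma continuous_on_Phi_root: "continuous_on {-1<..} Phi_root"
proof -
  have "isCont Phi_root s" if "-1 < s" for s
  proof -
    consider "s < 1" | "s = 1" | "1 < s" by linarith
    then show ?thesis
    proof cases
      case 1
      with that continuous_on_Phi_root_below show ?thesis
        by (simp add: continuous_on_eq_continuous_at)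
    next
      case 2
      then show ?thesis by (simp add: isCont_Phi_root_1)
    next
      case 3
      with continuous_on_Phi_root_above show ?thesis
        by (simp add: continuous_on_eq_continuous_at)
    qed
  qed
  then show ?thesis
    by (simp add: continuous_on_eq_continuous_at)
qed

theorem corollary3p10:
  shows "continuous_on {0..} Phi"
proof -
  have "continuous_on {0..} (\<lambda>E. Phi_root (sqrt E))"
    by (rule continuous_on_compose2[OF continuous_on_Phi_root])
      (auto intro: continuous_intros less_le_trans[of "-1" 0])
  then show ?thesis
    by (rule continuous_on_eq) (simp add: Phi_eq_Phi_root)
qed

end
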